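(* Let $\alpha\in(0,\frac12)$ and $d\ge2$ be such that $(d+1)\alpha\notin\mathbb{Z}$. Then there is no real linear subspace of $\mathbb{C}^{\mathcal A_d}$, other than $\{0\}$ and $\mathbb{C}^{\mathcal A_d}$, which is invariant under every $L_p$, $p\in\mathcal A_d$.
   Context: $\mathcal A_d=\{1-d,3-d,\dots,d-1\}$ (ordered as integers), $(e_q)_{q\in\mathcal A_d}$ the canonical basis of $\mathbb{C}^{\mathcal A_d}$, $\rho=e^{2\pi i\alpha}$, $\zeta=\rho^{-1}$. For $p\in\mathcal A_d$, $L_p$ is the $\mathbb{C}$-linear operator with $L_p(e_q)=e_q-e_p$ if $q>p$, $L_p(e_q)=e_q-\zeta e_p$ if $q<p$, and $L_p(e_p)=-\zeta e_p$. *)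

theory Defs
  imports "HOL-Analysis.Analysis"
begin

definition Aset :: "nat \<Rightarrow> int set" where
  "Aset d = {q. \<exists>k::nat. k < d \<and> q = 1 - int d + 2 * int k}"

text \<open>C^{A_d}: complex vectors indexed by integers, supported on A_d.\<close>
definition Cspace :: "nat \<Rightarrow> (int \<Rightarrow> complex) set" where
  "Cspace d = {v. \<forall>q. q \<notin> Aset d \<longrightarrow> v q = 0}"

definition ebasis :: "int \<Rightarrow> (int \<Rightarrow> complex)" where
  "ebasis q = (\<lambda>r. if r = q then 1 else 0)"

definition rho :: "real \<Rightarrow> complex" where
  "rho \<alpha> = exp (2 * pi * \<i> * complex_of_real \<alpha>)"

definition zeta :: "real \<Rightarrow> complex" where
  "zeta \<alpha> = inverse (rho \<alpha>)"

definition Lbasis :: "real \<Rightarrow> int \<Rightarrow> int \<Rightarrow> (int \<Rightarrow> complex)" where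
  "Lbasis \<alpha> p q =
     (if q > p then (\<lambda>r. ebasis q r - ebasis p r)
      else if q < p then (\<lambda>r. ebasis q r - zeta \<alpha> * ebasis p r)
      else (\<lambda>r. - zeta \<alpha> * ebasis p r))"

definition Lop :: "nat \<Rightarrow> real \<Rightarrow> int \<Rightarrow> (int \<Rightarrow> complex) \<Rightarrow> (int \<Rightarrow> complex)" where
  "Lop d \<alpha> p v = (\<lambda>r. \<Sum>q\<in>Aset d. v q * Lbasis \<alpha> p q r)"

definition real_subspace_of :: "nat \<Rightarrow> (int \<Rightarrow> complex) set \<Rightarrow> bool" where
  "real_subspace_of d W \<longleftrightarrow>
     W \<subseteq> Cspace d \<and> (\<lambda>r. 0) \<in> W \<and>
     (\<forall>v\<in>W. \<forall>w\<in>W. (\<lambda>r. v r + w r) \<in> W) \<and>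
     (\<forall>c::real. \<forall>v\<in>W. (\<lambda>r. complex_of_real c * v r) \<in> W)"

end

theory Submission
  imports Defs
begin

text \<open>Each \<open>L\<^sub>p\<close> is a rank-one perturbation of the identity, \<open>L\<^sub>p v = v - \<phi>\<^sub>p(v) e\<^sub>p\<close>.
  The functionals \<open>\<phi>\<^sub>p\<close> have no common nonzero zero: subtracting consecutive equations
  gives \<open>v\<^sub>q = \<zeta> v\<^sub>q\<^sub>+\<^sub>2\<close>, and the remaining equation becomes
  \<open>1 + \<rho> + \<dots> + \<rho>\<^sup>d = 0\<close>, i.e. \<open>\<rho>\<^sup>d\<^sup>+\<^sup>1 = 1\<close>, which is excluded.
  So a nonzero invariant subspace contains \<open>v - L\<^sub>p v\<close>, a nonzero multiple of some \<open>e\<^sub>p\<close>.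
  Since \<open>L\<^sub>p e\<^sub>p = -\<zeta> e\<^sub>p\<close> with \<open>\<zeta>\<close> not real, the real subspace then contains
  all of \<open>\<complex> e\<^sub>p\<close>; and \<open>e\<^sub>p - L\<^sub>p\<^sub>' e\<^sub>p\<close> is a nonzero multiple of \<open>e\<^sub>p\<^sub>'\<close>,
  so it contains every coordinate line.\<close>

text \<open>\<open>L\<^sub>p e\<^sub>q = e\<^sub>q - Lcoeff \<zeta> p q e\<^sub>p\<close>. The index order is generic so that the same
  coefficients serve for \<open>\<A>\<^sub>d\<close> and for its enumeration by \<open>{..<d}\<close>.\<close>
definition Lcoeff :: "'b::{one,plus} \<Rightarrow> 'a::linorder \<Rightarrow> 'a \<Rightarrow> 'b" where
  "Lcoeff z p q = (if p < q then 1 else if q < p then z else 1 + z)"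

lemma Lcoeff_strict_mono:
  "strict_mono f \<Longrightarrow> Lcoeff z (f p) (f q) = Lcoeff z p q"
  unfolding Lcoeff_def by (simp add: strict_mono_less)

definition Lfun :: "nat \<Rightarrow> real \<Rightarrow> int \<Rightarrow> (int \<Rightarrow> complex) \<Rightarrow> complex" where
  "Lfun d \<alpha> p v = (\<Sum>q\<in>Aset d. v q * Lcoeff (zeta \<alpha>) p q)"

lemma geometric_sum_nonzero:
  fixes r :: "'a::field"
  assumes "r ^ Suc n \<noteq> 1"
  shows "(\<Sum>j<Suc n. r ^ j) \<noteq> 0"
proof -
  have "r \<noteq> 1" using assms by auto
  then have "(\<Sum>j<Suc n. r ^ j) = (r ^ Suc n - 1) / (r - 1)" by (rule geometric_sum)
  then show ?thesis using assms \<open>r \<noteq> 1\<close> by simp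
qed

lemma rho_power_eq_1_imp_Ints:
  assumes "rho \<alpha> ^ m = 1"
  shows "real m * \<alpha> \<in> \<int>"
proof -
  have "exp (of_nat m * (2 * pi * \<i> * complex_of_real \<alpha>)) = 1"
    using assms unfolding rho_def by (simp add: exp_of_nat_mult)
  then obtain n :: int where "real m * (2 * pi * \<alpha>) = of_int (2 * n) * pi"
    unfolding exp_eq_1 by auto
  then have "real m * \<alpha> = of_int n" by (simp add: field_simps)
  then show ?thesis by simp
qed

lemma zeta_nonzero: "zeta \<alpha> \<noteq> 0"
  unfolding zeta_def rho_def by simp

lemma Im_zeta_neg:
  assumes "0 < \<alpha>" "\<alpha> < 1/2"
  shows "Im (zeta \<alpha>) < 0"
proof -
  have "zeta \<alpha> = exp (- (2 * pi * \<i> * complex_of_real \<alpha>))"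
    unfolding zeta_def rho_def by (simp add: exp_minus)
  then have "Im (zeta \<alpha>) = - sin (2 * pi * \<alpha>)" by (simp add: Im_exp)
  moreover have "sin (2 * pi * \<alpha>) > 0" using assms by (intro sin_gt_zero) auto
  ultimately show ?thesis by simp
qed

lemma Lcoeff_zeta_nonzero:
  assumes "0 < \<alpha>" "\<alpha> < 1/2"
  shows "Lcoeff (zeta \<alpha>) p q \<noteq> 0"
proof -
  have "Im (1 + zeta \<alpha>) \<noteq> 0" using Im_zeta_neg[OF assms] by simp
  then have "1 + zeta \<alpha> \<noteq> 0" by (metis zero_complex.sel(2))
  then show ?thesis using zeta_nonzero unfolding Lcoeff_def by simp
qed

lemma complex_real_combination:
  assumes "Im w \<noteq> 0"
  obtains a b :: real where "t = of_real a + of_real b * w"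
proof
  define b where "b = Im t / Im w"
  show "t = of_real (Re t - b * Re w) + of_real b * w"
    using assms by (simp add: complex_eq_iff b_def)
qed

lemma Lcoeff_rows_recurrence:
  fixes u :: "nat \<Rightarrow> 'a::comm_ring_1"
  assumes "Suc k < n"
    and "(\<Sum>j<n. u j * Lcoeff z k j) = 0" "(\<Sum>j<n. u j * Lcoeff z (Suc k) j) = 0"
  shows "u k = z * u (Suc k)"
proof -
  have "0 = (\<Sum>j<n. u j * (Lcoeff z (Suc k) j - Lcoeff z k j))"
    using assms(2,3) by (simp add: sum_subtractf algebra_simps)
  also have "\<dots> = (\<Sum>j<n. (if j = Suc k then z * u j else 0) - (if j = k then u j else 0))"
    by (rule sum.cong) (auto simp: Lcoeff_def algebra_simps)
  also have "\<dots> = z * u (Suc k) - u k"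
    using assms(1) by (simp add: sum_subtractf)
  finally show ?thesis by (simp add: algebra_simps)
qed

lemma Lcoeff_system_trivial_kernel:
  fixes u :: "nat \<Rightarrow> 'a::field"
  assumes "z \<noteq> 0" and "inverse z ^ Suc n \<noteq> 1"
    and rows: "\<And>k. k < n \<Longrightarrow> (\<Sum>j<n. u j * Lcoeff z k j) = 0"
    and "k < n"
  shows "u k = 0"
proof -
  define r where "r = inverse z"
  have powers: "u k = r ^ k * u 0" if "k < n" for k
    using that
  proof (induction k)
    case (Suc k)
    then have "u k = z * u (Suc k)"
      using rows by (intro Lcoeff_rows_recurrence) auto
    with Suc show ?case using \<open>z \<noteq> 0\<close> by (simp add: r_def field_simps)
  qed simp
  have "(\<Sum>j<n. u j * Lcoeff z 0 j) = (\<Sum>j<n. u j + (if j = 0 then z * u j else 0))"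
    by (rule sum.cong) (auto simp: Lcoeff_def algebra_simps)
  also have "\<dots> = (\<Sum>j<n. r ^ j * u 0) + z * u 0"
    using \<open>k < n\<close> by (simp add: sum.distrib) (intro sum.cong refl powers, simp)
  finally have "u 0 * ((\<Sum>j<n. r ^ j) + z) = 0"
    using rows \<open>k < n\<close> by (simp add: sum_distrib_left algebra_simps)
  moreover have "r * ((\<Sum>j<n. r ^ j) + z) = (\<Sum>j<Suc n. r ^ j)"
    using \<open>z \<noteq> 0\<close> unfolding sum.lessThan_Suc_shift
    by (simp add: r_def sum_distrib_left distrib_left)
  ultimately have "u 0 = 0"
    using geometric_sum_nonzero[of r n] assms(2) by (auto simp: r_def)
  then show ?thesis using powers[OF \<open>k < n\<close>] by simp
qed

definition Aindex :: "nat \<Rightarrow> nat \<Rightarrow> int" where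
  "Aindex d k = 1 - int d + 2 * int k"

lemma Aset_eq_image: "Aset d = Aindex d ` {..<d}"
  unfolding Aset_def Aindex_def by auto

lemma strict_mono_Aindex: "strict_mono (Aindex d)"
  unfolding Aindex_def by (rule strict_monoI) simp

lemma finite_Aset: "finite (Aset d)"
  by (simp add: Aset_eq_image)

lemma Lfun_common_zero_eq_0:
  assumes "real (d + 1) * \<alpha> \<notin> \<int>" and "v \<in> Cspace d"
    and "\<forall>p\<in>Aset d. Lfun d \<alpha> p v = 0"
  shows "v = (\<lambda>r. 0)"
proof
  fix r
  have rows: "(\<Sum>j<d. v (Aindex d j) * Lcoeff (zeta \<alpha>) k j) = 0" if "k < d" for k
  proof -
    have "Lfun d \<alpha> (Aindex d k) v = 0"
      using assms(3) that by (simp add: Aset_eq_image)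
    then show ?thesis
      unfolding Lfun_def Aset_eq_image
      by (simp add: sum.reindex strict_mono_imp_inj_on[OF strict_mono_Aindex]
          Lcoeff_strict_mono[OF strict_mono_Aindex])
  qed
  have "inverse (zeta \<alpha>) ^ Suc d \<noteq> 1"
    using rho_power_eq_1_imp_Ints[of \<alpha> "Suc d"] assms(1) by (auto simp: zeta_def)
  then have coords: "v (Aindex d k) = 0" if "k < d" for k
    using Lcoeff_system_trivial_kernel[OF zeta_nonzero _ rows that] by blast
  show "v r = 0"
  proof (cases "r \<in> Aset d")
    case True
    then obtain k where "k < d" "r = Aindex d k" by (auto simp: Aset_eq_image)
    with coords show ?thesis by simp
  next
    case False
    with assms(2) show ?thesis by (simp add: Cspace_def)
  qed
qed

lemma sum_ebasis:
  assumes "v \<in> Cspace d"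
  shows "(\<Sum>q\<in>Aset d. v q * ebasis q r) = v r"
proof -
  have "(\<Sum>q\<in>Aset d. v q * ebasis q r) = (if r \<in> Aset d then v r else 0)"
    using finite_Aset by (simp add: ebasis_def if_distrib[of "(*) _"] sum.delta cong: if_cong)
  also have "\<dots> = v r" using assms unfolding Cspace_def by auto
  finally show ?thesis .
qed

lemma Lop_eq:
  assumes "v \<in> Cspace d"
  shows "Lop d \<alpha> p v = (\<lambda>r. v r - Lfun d \<alpha> p v * ebasis p r)"
proof
  fix r
  have "Lbasis \<alpha> p q r = ebasis q r - Lcoeff (zeta \<alpha>) p q * ebasis p r" for q
    unfolding Lbasis_def Lcoeff_def by (auto simp: algebra_simps)
  then have "Lop d \<alpha> p v r
      = (\<Sum>q\<in>Aset d. v q * ebasis q r) - Lfun d \<alpha> p v * ebasis p r"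
    unfolding Lop_def Lfun_def
    by (simp add: right_diff_distrib sum_subtractf sum_distrib_right mult.assoc)
  then show "Lop d \<alpha> p v r = v r - Lfun d \<alpha> p v * ebasis p r"
    using sum_ebasis[OF assms] by simp
qed

lemma ebasis_multiple_in_Cspace: "p \<in> Aset d \<Longrightarrow> (\<lambda>r. z * ebasis p r) \<in> Cspace d"
  unfolding Cspace_def ebasis_def by auto

lemma Lfun_ebasis_multiple:
  assumes "p \<in> Aset d"
  shows "Lfun d \<alpha> p' (\<lambda>r. z * ebasis p r) = z * Lcoeff (zeta \<alpha>) p' p"
proof -
  have "Lfun d \<alpha> p' (\<lambda>r. z * ebasis p r)
      = (\<Sum>q\<in>Aset d. if p = q then z * Lcoeff (zeta \<alpha>) p' q else 0)"
    unfolding Lfun_def by (rule sum.cong) (auto simp: ebasis_def)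
  then show ?thesis using assms finite_Aset by simp
qed

lemma Lop_ebasis_multiple:
  "p \<in> Aset d \<Longrightarrow> Lop d \<alpha> p' (\<lambda>r. z * ebasis p r)
     = (\<lambda>r. z * ebasis p r - z * Lcoeff (zeta \<alpha>) p' p * ebasis p' r)"
  by (simp add: Lop_eq ebasis_multiple_in_Cspace Lfun_ebasis_multiple)

lemma real_subspace_of_lincomb:
  assumes "real_subspace_of d W" "v \<in> W" "w \<in> W"
  shows "(\<lambda>r. of_real a * v r + of_real b * w r) \<in> W"
proof -
  have "(\<lambda>r. of_real a * v r) \<in> W" "(\<lambda>r. of_real b * w r) \<in> W"
    using assms unfolding real_subspace_of_def by auto
  then show ?thesis using assms(1) unfolding real_subspace_of_def by simp
qed

lemma real_subspace_of_diff:
  assumes "real_subspace_of d W" "v \<in> W" "w \<in> W"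
  shows "(\<lambda>r. v r - w r) \<in> W"
  using real_subspace_of_lincomb[OF assms, of 1 "-1"] by simp

lemma real_subspace_of_sum:
  assumes "real_subspace_of d W" "finite S" "\<forall>q\<in>S. f q \<in> W"
  shows "(\<lambda>r. \<Sum>q\<in>S. f q r) \<in> W"
  using assms(2,3)
proof (induction S rule: finite_induct)
  case empty
  then show ?case using assms(1) unfolding real_subspace_of_def by simp
next
  case (insert x F)
  then show ?case using assms(1) unfolding real_subspace_of_def by simp
qed

lemma real_subspace_of_complex_line:
  assumes "real_subspace_of d W" "Im w \<noteq> 0" "z \<noteq> 0"
    and "(\<lambda>r. z * e r) \<in> W" "(\<lambda>r. w * z * e r) \<in> W"
  shows "(\<lambda>r. t * e r) \<in> W"
proof -
  obtain a b :: real where ab: "t / z = of_real a + of_real b * w"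
    using complex_real_combination[OF assms(2)] by blast
  have "(\<lambda>r. t * e r) = (\<lambda>r. of_real a * (z * e r) + of_real b * (w * z * e r))"
    using assms(3) ab by (simp add: field_simps)
  with real_subspace_of_lincomb[OF assms(1,4,5)] show ?thesis by simp
qed

lemma real_subspace_of_coordinate_lines:
  assumes "real_subspace_of d W" "\<forall>p\<in>Aset d. \<forall>w. (\<lambda>r. w * ebasis p r) \<in> W"
  shows "Cspace d \<subseteq> W"
proof
  fix v assume "v \<in> Cspace d"
  have "(\<lambda>r. \<Sum>q\<in>Aset d. v q * ebasis q r) \<in> W"
    using assms by (intro real_subspace_of_sum finite_Aset) auto
  then show "v \<in> W" using sum_ebasis[OF \<open>v \<in> Cspace d\<close>] by simp
qed

locale Lop_invariant_subspace =
  fixes d :: nat and \<alpha> :: real and W :: "(int \<Rightarrow> complex) set"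
  assumes alpha_pos: "0 < \<alpha>" and alpha_less: "\<alpha> < 1/2"
    and subspace: "real_subspace_of d W"
    and invariant: "\<forall>p\<in>Aset d. \<forall>v\<in>W. Lop d \<alpha> p v \<in> W"
begin

lemma rank_one_part_in:
  assumes "p \<in> Aset d" "v \<in> W"
  shows "(\<lambda>r. Lfun d \<alpha> p v * ebasis p r) \<in> W"
proof -
  have "v \<in> Cspace d" using assms(2) subspace unfolding real_subspace_of_def by blast
  have "(\<lambda>r. v r - Lop d \<alpha> p v r) \<in> W"
    using assms invariant by (intro real_subspace_of_diff[OF subspace]) auto
  then show ?thesis by (simp add: Lop_eq[OF \<open>v \<in> Cspace d\<close>])
qed

lemma coordinate_line_in:
  assumes "p \<in> Aset d" "z \<noteq> 0" "(\<lambda>r. z * ebasis p r) \<in> W"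
  shows "(\<lambda>r. t * ebasis p r) \<in> W"
proof (rule real_subspace_of_complex_line[OF subspace _ assms(2,3)])
  show "Im (- zeta \<alpha>) \<noteq> 0" using Im_zeta_neg[OF alpha_pos alpha_less] by simp
  have "Lop d \<alpha> p (\<lambda>r. z * ebasis p r) \<in> W" using invariant assms(1,3) by blast
  then show "(\<lambda>r. - zeta \<alpha> * z * ebasis p r) \<in> W"
    using assms(1) by (simp add: Lop_ebasis_multiple Lcoeff_def algebra_simps)
qed

lemma coordinate_line_propagates:
  assumes "p \<in> Aset d" "p' \<in> Aset d" "\<forall>w. (\<lambda>r. w * ebasis p r) \<in> W"
  shows "(\<lambda>r. t * ebasis p' r) \<in> W"
proof (rule coordinate_line_in[OF assms(2) Lcoeff_zeta_nonzero[OF alpha_pos alpha_less]])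
  have e: "ebasis p \<in> W" using spec[OF assms(3), of 1] by simp
  then have "Lop d \<alpha> p' (ebasis p) \<in> W" using invariant assms(2) by blast
  with e have "(\<lambda>r. ebasis p r - Lop d \<alpha> p' (ebasis p) r) \<in> W"
    by (rule real_subspace_of_diff[OF subspace])
  moreover have "Lop d \<alpha> p' (ebasis p) = (\<lambda>r. ebasis p r - Lcoeff (zeta \<alpha>) p' p * ebasis p' r)"
    using Lop_ebasis_multiple[OF assms(1), of \<alpha> p' 1] by simp
  ultimately show "(\<lambda>r. Lcoeff (zeta \<alpha>) p' p * ebasis p' r) \<in> W" by simp
qed

end

theorem mainTheorem18:
  fixes \<alpha> :: real and d :: nat and W :: "(int \<Rightarrow> complex) set"
  assumes "0 < \<alpha>" and "\<alpha> < 1/2" and "d \<ge> 2"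
    and "real (d + 1) * \<alpha> \<notin> \<int>"
    and "real_subspace_of d W"
    and "\<forall>p\<in>Aset d. \<forall>v\<in>W. Lop d \<alpha> p v \<in> W"
  shows "W = {(\<lambda>r. 0)} \<or> W = Cspace d"
proof (cases "W \<subseteq> {(\<lambda>r. 0)}")
  case True
  then show ?thesis using assms(5) unfolding real_subspace_of_def by blast
next
  case False
  interpret Lop_invariant_subspace d \<alpha> W
    using assms(1,2,5,6) by unfold_locales
  obtain v where "v \<in> W" "v \<noteq> (\<lambda>r. 0)" using False by blast
  moreover have "v \<in> Cspace d" using \<open>v \<in> W\<close> assms(5) unfolding real_subspace_of_def by blast
  ultimately obtain p where p: "p \<in> Aset d" and "Lfun d \<alpha> p v \<noteq> 0"
    using Lfun_common_zero_eq_0[OF assms(4)] by blast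
  then have "\<forall>w. (\<lambda>r. w * ebasis p r) \<in> W"
    using coordinate_line_in rank_one_part_in[OF p \<open>v \<in> W\<close>] by blast
  then have "Cspace d \<subseteq> W"
    using coordinate_line_propagates[OF p] by (intro real_subspace_of_coordinate_lines[OF assms(5)]) blast
  then show ?thesis using assms(5) unfolding real_subspace_of_def by blast
qed

end
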